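(* Let $Q$ be a real affine space modelled on a real vector space $V$ and let $f,f'\in A(Q)$, $n\in\mathbb N$. Suppose that for every $k\le n$ the multidirectional derivatives $\mathrm d^kf(q;w_1,\dots,w_k)$ and $\mathrm d^kf'(q;w_1,\dots,w_k)$ exist (for all $q\in Q$, $w_i\in V$). Then for all $q\in Q$ and $v_1,\dots,v_n\in V$, $$\mathrm d^n(ff')(q;v_1,\dots,v_n)=\sum_{\substack{(I,I')\\ I\cup I'=N,\ I\cap I'=\emptyset}}\mathrm d^{|I|}f(q;\mathbf v^I)\,\mathrm d^{|I'|}f'(q;\mathbf v^{I'}),$$ the sum running over ordered pairs of disjoint (possibly empty) subsets of $N=\{1,\dots,n\}$ with union $N$.
   Context: $A(Q)$: real functions on $Q$. For $I=\{i_1<\dots<i_m\}$, $\mathbf v^I=(v_{i_1},\dots,v_{i_m})$. The $k$-th polarization: $\delta^0f=f$ and for $k\ge1$, $\delta^kf(q;w_1,\dots,w_k)=(-1)^k\sum_{J\subset\{1,\dots,k\}}(-1)^{|J|}f(q+\sum_{j\in J}w_j)$ (the $J=\emptyset$ term is $f(q)$). The $k$-th multidirectional derivative is $\mathrm d^kf(q;w_1,\dots,w_k)=\lim_{s\to0}s^{-k}\delta^kf(q;sw_1,\dots,sw_k)$ when the limit exists; $\mathrm d^0f(q)=f(q)$. *)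

theory Defs
  imports "HOL-Analysis.Analysis"
begin

text \<open>A real affine space Q modelled on a real vector space V, given by a
  simply transitive action act q v = q + v.\<close>

definition affine_space :: "('q \<Rightarrow> 'v::real_vector \<Rightarrow> 'q) \<Rightarrow> bool" where
  "affine_space act \<longleftrightarrow>
     (\<forall>q. act q 0 = q) \<and>
     (\<forall>q v w. act (act q v) w = act q (v + w)) \<and>
     (\<forall>p q. \<exists>!v. act p v = q)"

text \<open>k-th polarization; the directions w_1..w_k are the list ws (k = length ws),
  w_j = ws ! (j-1).\<close>

definition polarization ::
  "('q \<Rightarrow> 'v::real_vector \<Rightarrow> 'q) \<Rightarrow> ('q \<Rightarrow> real) \<Rightarrow> 'q \<Rightarrow> 'v list \<Rightarrow> real" where
  "polarization act f q ws =
     (-1) ^ length ws *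
     (\<Sum>J\<in>Pow {..<length ws}. (-1) ^ card J * f (act q (\<Sum>j\<in>J. ws ! j)))"

definition has_mdd ::
  "('q \<Rightarrow> 'v::real_vector \<Rightarrow> 'q) \<Rightarrow> ('q \<Rightarrow> real) \<Rightarrow> 'q \<Rightarrow> 'v list \<Rightarrow> real \<Rightarrow> bool" where
  "has_mdd act f q ws L \<longleftrightarrow>
     (if ws = [] then L = f q
      else ((\<lambda>s. polarization act f q (map (\<lambda>w. s *\<^sub>R w) ws) / s ^ length ws) \<longlongrightarrow> L) (at 0))"

definition mdd_exists ::
  "('q \<Rightarrow> 'v::real_vector \<Rightarrow> 'q) \<Rightarrow> ('q \<Rightarrow> real) \<Rightarrow> 'q \<Rightarrow> 'v list \<Rightarrow> bool" where
  "mdd_exists act f q ws \<longleftrightarrow> (\<exists>L. has_mdd act f q ws L)"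

definition mdd ::
  "('q \<Rightarrow> 'v::real_vector \<Rightarrow> 'q) \<Rightarrow> ('q \<Rightarrow> real) \<Rightarrow> 'q \<Rightarrow> 'v list \<Rightarrow> real" where
  "mdd act f q ws = (THE L. has_mdd act f q ws L)"

definition subvec :: "(nat \<Rightarrow> 'v) \<Rightarrow> nat set \<Rightarrow> 'v list" where
  "subvec v I = map v (sorted_list_of_set I)"

end

(*
  Put F s J = f (q + s * sum_{j in J} v j).  The polarization of f at q in the directions
  s v_i (i in A) is the Moebius transform of F s on the lattice of subsets of A.  Moebius
  inversion on that lattice gives a Leibniz rule: the transform of the product F s * G s at N
  is the sum over all covers A \<union> B = N of the product of the transforms at A and at B.
  Dividing by s^|N| turns each summand into the product of the difference quotients of f
  and f' times s^|A \<inter> B|, so as s tends to 0 only the disjoint covers survive.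
*)

theory Submission
  imports Defs
begin

definition subset_moebius :: "('a set \<Rightarrow> 'b::comm_ring_1) \<Rightarrow> 'a set \<Rightarrow> 'b" where
  "subset_moebius F A = (\<Sum>J\<in>Pow A. (-1) ^ (card A - card J) * F J)"

lemma subset_moebius_conv_signed_sum:
  assumes "finite A"
  shows "subset_moebius F A = (-1) ^ card A * (\<Sum>J\<in>Pow A. (-1) ^ card J * F J)"
  unfolding subset_moebius_def sum_distrib_left
proof (rule sum.cong)
  fix J assume "J \<in> Pow A"
  then have "card J \<le> card A" using assms by (auto intro: card_mono)
  then show "(-1) ^ (card A - card J) * F J = (-1) ^ card A * ((-1) ^ card J * F J)"
    by (simp add: power_add flip: neg_one_power_add_eq_neg_one_power_diff)
qed simp

lemma sum_Pow_subset_moebius: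
  assumes "finite L"
  shows "(\<Sum>A\<in>Pow L. subset_moebius F A) = F L"
proof -
  have "(\<Sum>A\<in>Pow L. subset_moebius F A) =
      (\<Sum>A\<in>Pow L. (-1) ^ card A * (\<Sum>J\<in>Pow A. (-1) ^ card J * F J))"
    using assms by (intro sum.cong) (auto intro: subset_moebius_conv_signed_sum finite_subset)
  also have "\<dots> = F L"
    by (rule inclusion_exclusion_symmetric[symmetric]) (use assms in simp_all)
  finally show ?thesis .
qed

lemma subset_moebius_sum_Pow:
  assumes "finite N"
  shows "subset_moebius (\<lambda>L. \<Sum>C\<in>Pow L. H C) N = H N"
  unfolding subset_moebius_def using assms by (intro inclusion_exclusion_mobius[symmetric]) simp_all

lemma subset_moebius_cong:
  "(\<And>L. L \<subseteq> N \<Longrightarrow> F L = G L) \<Longrightarrow> subset_moebius F N = subset_moebius G N"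
  unfolding subset_moebius_def by (intro sum.cong) auto

lemma subset_moebius_mult:
  assumes "finite N"
  shows "subset_moebius (\<lambda>L. F L * G L) N =
    (\<Sum>(A, B)\<in>{(A, B). A \<union> B = N}. subset_moebius F A * subset_moebius G B)"
proof -
  define H where "H C = (\<Sum>(A, B)\<in>{(A, B). A \<union> B = C}. subset_moebius F A * subset_moebius G B)" for C
  have "F L * G L = (\<Sum>C\<in>Pow L. H C)" if "L \<subseteq> N" for L
  proof -
    have fin: "finite L" using that assms by (rule finite_subset)
    have "F L * G L = (\<Sum>A\<in>Pow L. subset_moebius F A) * (\<Sum>B\<in>Pow L. subset_moebius G B)"
      using fin by (simp add: sum_Pow_subset_moebius)
    also have "\<dots> = (\<Sum>(A, B)\<in>Pow L \<times> Pow L. subset_moebius F A * subset_moebius G B)"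
      by (simp add: sum_product sum.cartesian_product)
    also have "\<dots> = (\<Sum>C\<in>Pow L. \<Sum>(A, B)\<in>{p \<in> Pow L \<times> Pow L. fst p \<union> snd p = C}.
        subset_moebius F A * subset_moebius G B)"
      using fin by (intro sum.group[symmetric]) auto
    also have "\<dots> = (\<Sum>C\<in>Pow L. H C)"
      unfolding H_def by (intro sum.cong arg_cong2[where f = sum]) auto
    finally show ?thesis .
  qed
  then have "subset_moebius (\<lambda>L. F L * G L) N = subset_moebius (\<lambda>L. \<Sum>C\<in>Pow L. H C) N"
    by (rule subset_moebius_cong)
  also have "\<dots> = H N" using assms by (rule subset_moebius_sum_Pow)
  finally show ?thesis unfolding H_def .
qed

lemma finite_covers: "finite N \<Longrightarrow> finite {(A, B). A \<union> B = N}"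
  by (rule finite_subset[of _ "Pow N \<times> Pow N"]) auto

lemma sum_covers_zero_power_eq_sum_partitions:
  fixes a b :: "'a set \<Rightarrow> 'k::semiring_1"
  assumes "finite N"
  shows "(\<Sum>(A, B)\<in>{(A, B). A \<union> B = N}. a A * b B * 0 ^ (card A + card B - card N)) =
    (\<Sum>(A, B)\<in>{(A, B). A \<union> B = N \<and> A \<inter> B = {}}. a A * b B)"
proof -
  let ?parts = "{(A, B). A \<union> B = N \<and> A \<inter> B = {}}"
  let ?g = "\<lambda>(A, B). a A * b B * 0 ^ (card A + card B - card N)"
  have overlap: "(0::'k) ^ (card A + card B - card N) = (if A \<inter> B = {} then 1 else 0)"
    if "A \<union> B = N" for A B
    using that assms card_Un_Int[of A B] by (auto simp: power_0_left card_eq_0_iff)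
  show ?thesis
  proof (rule sum.mono_neutral_cong_right[OF finite_covers[OF assms]])
    show "\<forall>p\<in>{(A, B). A \<union> B = N} - ?parts. ?g p = 0"
    proof
      fix p assume "p \<in> {(A, B). A \<union> B = N} - ?parts"
      then obtain A B where "p = (A, B)" "A \<union> B = N" "A \<inter> B \<noteq> {}" by auto
      then show "?g p = 0" using overlap by simp
    qed
    fix p assume "p \<in> ?parts"
    then obtain A B where "p = (A, B)" "A \<union> B = N" "A \<inter> B = {}" by auto
    then show "?g p = (case p of (A, B) \<Rightarrow> a A * b B)" using overlap by simp
  qed blast
qed

lemma tendsto_scaled_subset_moebius_mult:
  fixes F G :: "'k::real_normed_field \<Rightarrow> 'a set \<Rightarrow> 'k"
  assumes fin: "finite N"
    and F: "\<And>A. A \<subseteq> N \<Longrightarrow> ((\<lambda>s. subset_moebius (F s) A / s ^ card A) \<longlongrightarrow> a A) (at 0)"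
    and G: "\<And>B. B \<subseteq> N \<Longrightarrow> ((\<lambda>s. subset_moebius (G s) B / s ^ card B) \<longlongrightarrow> b B) (at 0)"
  shows "((\<lambda>s. subset_moebius (\<lambda>L. F s L * G s L) N / s ^ card N)
           \<longlongrightarrow> (\<Sum>(A, B)\<in>{(A, B). A \<union> B = N \<and> A \<inter> B = {}}. a A * b B)) (at 0)"
proof -
  let ?excess = "\<lambda>A B. card A + card B - card N"
  let ?approx = "\<lambda>s. \<Sum>(A, B)\<in>{(A, B). A \<union> B = N}.
      subset_moebius (F s) A / s ^ card A * (subset_moebius (G s) B / s ^ card B) * s ^ ?excess A B"
  have rescale: "x * y / s ^ card (A \<union> B) =
      x / s ^ card A * (y / s ^ card B) * s ^ (card A + card B - card (A \<union> B))"
    if "s \<noteq> 0" for x y s :: 'k and A B :: "'a set"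
  proof -
    have "card (A \<union> B) \<le> card A + card B" by (rule card_Un_le)
    then have "s ^ card A * s ^ card B = s ^ card (A \<union> B) * s ^ (card A + card B - card (A \<union> B))"
      by (simp flip: power_add)
    then show ?thesis using \<open>s \<noteq> 0\<close> by (simp add: field_simps)
  qed
  have "subset_moebius (\<lambda>L. F s L * G s L) N / s ^ card N = ?approx s" if "s \<noteq> 0" for s
    unfolding subset_moebius_mult[OF fin] sum_divide_distrib
    by (intro sum.cong refl) (clarsimp simp: rescale[OF that])
  then have approx: "\<forall>\<^sub>F s in at 0. ?approx s = subset_moebius (\<lambda>L. F s L * G s L) N / s ^ card N"
    by (intro eventually_mono[OF eventually_neq_at_within[of 0 0 UNIV]]) simp
  have "(?approx \<longlongrightarrow> (\<Sum>(A, B)\<in>{(A, B). A \<union> B = N}. a A * b B * 0 ^ ?excess A B)) (at 0)"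
    by (intro tendsto_sum, clarify, intro tendsto_mult tendsto_power tendsto_ident_at F G) auto
  also have "(\<Sum>(A, B)\<in>{(A, B). A \<union> B = N}. a A * b B * 0 ^ ?excess A B) =
      (\<Sum>(A, B)\<in>{(A, B). A \<union> B = N \<and> A \<inter> B = {}}. a A * b B)"
    using fin by (rule sum_covers_zero_power_eq_sum_partitions)
  finally show ?thesis using approx by (rule Lim_transform_eventually)
qed

lemma polarization_subvec:
  assumes "finite I"
  shows "polarization act h q (subvec u I) = subset_moebius (\<lambda>J. h (act q (\<Sum>j\<in>J. u j))) I"
proof -
  let ?xs = "sorted_list_of_set I"
  let ?g = "\<lambda>J. (-1) ^ card J * h (act q (\<Sum>j\<in>J. u j))"
  have bij: "bij_betw ((!) ?xs) {..<card I} I"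
    using assms by (intro bij_betw_nth) auto
  have "(\<Sum>J\<in>Pow {..<card I}. (-1) ^ card J * h (act q (\<Sum>j\<in>J. map u ?xs ! j))) =
      (\<Sum>J\<in>Pow {..<card I}. ?g ((!) ?xs ` J))"
  proof (rule sum.cong)
    fix J assume "J \<in> Pow {..<card I}"
    then have J: "J \<subseteq> {..<card I}" by simp
    then have "inj_on ((!) ?xs) J" by (rule inj_on_subset[OF bij_betw_imp_inj_on[OF bij]])
    moreover have "(\<Sum>j\<in>J. map u ?xs ! j) = (\<Sum>j\<in>J. u (?xs ! j))"
      using J by (intro sum.cong) auto
    ultimately show "(-1) ^ card J * h (act q (\<Sum>j\<in>J. map u ?xs ! j)) = ?g ((!) ?xs ` J)"
      by (simp add: card_image sum.reindex)
  qed simp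
  then have "polarization act h q (subvec u I) =
      (-1) ^ card I * (\<Sum>J\<in>Pow {..<card I}. ?g ((!) ?xs ` J))"
    unfolding polarization_def subvec_def by simp
  also have "\<dots> = (-1) ^ card I * (\<Sum>J\<in>Pow I. ?g J)"
    by (simp add: sum.reindex_bij_betw[OF bij_betw_image_Pow[OF bij], where g = ?g])
  also have "\<dots> = subset_moebius (\<lambda>J. h (act q (\<Sum>j\<in>J. u j))) I"
    using assms by (simp add: subset_moebius_conv_signed_sum)
  finally show ?thesis .
qed

lemma has_mdd_unique:
  assumes "has_mdd act f q ws L" "has_mdd act f q ws L'"
  shows "L = L'"
proof (cases "ws = []")
  case False
  with assms show ?thesis
    unfolding has_mdd_def by (auto intro: tendsto_unique[OF at_neq_bot])
qed (use assms in \<open>simp add: has_mdd_def\<close>)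

lemma has_mdd_mdd: "mdd_exists act f q ws \<Longrightarrow> has_mdd act f q ws (mdd act f q ws)"
  unfolding mdd_exists_def mdd_def by (metis has_mdd_unique theI)

lemma has_mdd_subvec_iff:
  assumes "act q 0 = q" "finite A"
  shows "has_mdd act h q (subvec v A) L \<longleftrightarrow>
    ((\<lambda>s. subset_moebius (\<lambda>J. h (act q (\<Sum>j\<in>J. s *\<^sub>R v j))) A / s ^ card A) \<longlongrightarrow> L) (at 0)"
proof (cases "A = {}")
  case True
  then show ?thesis
    by (simp add: assms(1) has_mdd_def subvec_def subset_moebius_def tendsto_const_iff
        eq_commute[of L])
next
  case False
  have "map ((*\<^sub>R) s) (subvec v A) = subvec (\<lambda>j. s *\<^sub>R v j) A" for s :: real
    unfolding subvec_def by simp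
  moreover have "subvec v A \<noteq> []" "length (subvec v A) = card A"
    using False assms(2) by (simp_all add: subvec_def)
  ultimately show ?thesis
    using assms(2) by (simp add: has_mdd_def polarization_subvec)
qed

theorem theorem1:
  fixes act :: "'q \<Rightarrow> 'v::real_vector \<Rightarrow> 'q"
    and f f' :: "'q \<Rightarrow> real" and n :: nat
  assumes "affine_space act"
    and "\<And>k q ws. k \<le> n \<Longrightarrow> length ws = k \<Longrightarrow> mdd_exists act f q ws"
    and "\<And>k q ws. k \<le> n \<Longrightarrow> length ws = k \<Longrightarrow> mdd_exists act f' q ws"
  shows "\<forall>q (v :: nat \<Rightarrow> 'v).
    has_mdd act (\<lambda>p. f p * f' p) q (subvec v {1..n})
      (\<Sum>(I, I')\<in>{(I, I'). I \<union> I' = {1..n} \<and> I \<inter> I' = {}}.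
          mdd act f q (subvec v I) * mdd act f' q (subvec v I'))"
proof (intro allI)
  fix q and v :: "nat \<Rightarrow> 'v"
  \<comment> \<open>the only property of the affine structure the argument needs\<close>
  have q0: "act q 0 = q"
    using assms(1) unfolding affine_space_def by blast
  have scaled_mdd: "((\<lambda>s. subset_moebius (\<lambda>J. h (act q (\<Sum>j\<in>J. s *\<^sub>R v j))) A / s ^ card A)
      \<longlongrightarrow> mdd act h q (subvec v A)) (at 0)"
    if "\<And>k q ws. k \<le> n \<Longrightarrow> length ws = k \<Longrightarrow> mdd_exists act h q ws" and "A \<subseteq> {1..n}"
    for h A
  proof -
    have "finite A" "card A \<le> n"
      using \<open>A \<subseteq> {1..n}\<close> by (auto dest: finite_subset card_mono[rotated])
    with that(1) show ?thesis
      by (simp add: has_mdd_mdd subvec_def flip: has_mdd_subvec_iff[of act q, OF q0])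
  qed
  show "has_mdd act (\<lambda>p. f p * f' p) q (subvec v {1..n})
      (\<Sum>(I, I')\<in>{(I, I'). I \<union> I' = {1..n} \<and> I \<inter> I' = {}}.
          mdd act f q (subvec v I) * mdd act f' q (subvec v I'))"
    unfolding has_mdd_subvec_iff[of act q, OF q0 finite_atLeastAtMost]
    by (rule tendsto_scaled_subset_moebius_mult) (simp_all add: scaled_mdd assms(2,3))
qed

end
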